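(* Let $(\varphi_n\colon n\in\mathbb{N})$ be a quotient-convergent sequence of increasing submodular setfunctions, each defined on some set-algebra. Then there exists an increasing submodular setfunction $\varphi\colon\mathcal{B}(C)\to\mathbb{R}$, defined on the Borel subsets of the Cantor set $C$, such that $\varphi_n\rightarrowtail\varphi$.
   Context: A set-algebra $(J,\mathcal{B})$ is a family of subsets of $J$ containing $\emptyset$ and closed under complement and finite union. A setfunction on it is a map $\varphi\colon\mathcal{B}\to\mathbb{R}$ with $\varphi(\emptyset)=0$; it is increasing if $X\subseteq Y$ implies $\varphi(X)\le\varphi(Y)$, and submodular if $\varphi(X)+\varphi(Y)\ge\varphi(X\cap Y)+\varphi(X\cup Y)$ for all $X,Y\in\mathcal{B}$. For $k\in\mathbb{N}$ and a map $F\colon J\to[k]$ with $F^{-1}(i)\in\mathcal{B}$ for all $i$, the quotient $\varphi\circ F^{-1}$ is the setfunction $A\mapsto\varphi(F^{-1}(A))$ on $2^{[k]}$, and $Q_k(\varphi)\subseteq\mathbb{R}^{2^k}$ is the set of all such quotients. A sequence $(\varphi_n)$ is quotient-convergent if for every $k$ the sets $Q_k(\varphi_n)$ form a Cauchy sequence in the Hausdorff distance on $\mathbb{R}^{2^k}$; it quotient-converges to $\varphi$, written $\varphi_n\rightarrowtail\varphi$, if for every $k$ the Hausdorff distance between $Q_k(\varphi_n)$ and $Q_k(\varphi)$ tends to $0$. *)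

theory Defs
  imports "HOL-Analysis.Analysis"
begin

text \<open>A setfunction on (J,B) is phi restricted to B, with phi of the empty set = 0.\<close>

definition setfunction :: "'a set \<Rightarrow> 'a set set \<Rightarrow> ('a set \<Rightarrow> real) \<Rightarrow> bool" where
  "setfunction J B phi \<longleftrightarrow> algebra J B \<and> phi {} = 0"

definition increasing_sf :: "'a set set \<Rightarrow> ('a set \<Rightarrow> real) \<Rightarrow> bool" where
  "increasing_sf B phi \<longleftrightarrow> (\<forall>X\<in>B. \<forall>Y\<in>B. X \<subseteq> Y \<longrightarrow> phi X \<le> phi Y)"

definition submodular_sf :: "'a set set \<Rightarrow> ('a set \<Rightarrow> real) \<Rightarrow> bool" where
  "submodular_sf B phi \<longleftrightarrow>
     (\<forall>X\<in>B. \<forall>Y\<in>B. phi X + phi Y \<ge> phi (X \<inter> Y) + phi (X \<union> Y))"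

text \<open>[k] is rendered as {..<k}. A quotient phi o F^-1 is a setfunction on 2^[k],
  represented as a function on nat sets which is 0 outside Pow {..<k}
  (so it is a point of R^(2^k)).\<close>

definition quotient_sf :: "nat \<Rightarrow> 'a set \<Rightarrow> ('a set \<Rightarrow> real) \<Rightarrow> ('a \<Rightarrow> nat) \<Rightarrow> (nat set \<Rightarrow> real)" where
  "quotient_sf k J phi F = (\<lambda>A. if A \<subseteq> {..<k} then phi {x\<in>J. F x \<in> A} else 0)"

definition Q :: "nat \<Rightarrow> 'a set \<Rightarrow> 'a set set \<Rightarrow> ('a set \<Rightarrow> real) \<Rightarrow> (nat set \<Rightarrow> real) set" where
  "Q k J B phi = {quotient_sf k J phi F | F.
      F \<in> J \<rightarrow> {..<k} \<and> (\<forall>i<k. {x\<in>J. F x = i} \<in> B)}"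

definition dist_k :: "nat \<Rightarrow> (nat set \<Rightarrow> real) \<Rightarrow> (nat set \<Rightarrow> real) \<Rightarrow> real" where
  "dist_k k f g = Max ((\<lambda>A. \<bar>f A - g A\<bar>) ` Pow {..<k})"

definition hausdorff_k :: "nat \<Rightarrow> (nat set \<Rightarrow> real) set \<Rightarrow> (nat set \<Rightarrow> real) set \<Rightarrow> real" where
  "hausdorff_k k S T = max (SUP f\<in>S. INF g\<in>T. dist_k k f g) (SUP g\<in>T. INF f\<in>S. dist_k k f g)"

definition quotient_convergent ::
  "(nat \<Rightarrow> 'a set) \<Rightarrow> (nat \<Rightarrow> 'a set set) \<Rightarrow> (nat \<Rightarrow> 'a set \<Rightarrow> real) \<Rightarrow> bool" where
  "quotient_convergent J B phi \<longleftrightarrow>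
     (\<forall>k\<ge>1. \<forall>e>0. \<exists>N. \<forall>m\<ge>N. \<forall>n\<ge>N.
        hausdorff_k k (Q k (J m) (B m) (phi m)) (Q k (J n) (B n) (phi n)) < e)"

definition quotient_converges_to ::
  "(nat \<Rightarrow> 'a set) \<Rightarrow> (nat \<Rightarrow> 'a set set) \<Rightarrow> (nat \<Rightarrow> 'a set \<Rightarrow> real) \<Rightarrow>
   'b set \<Rightarrow> 'b set set \<Rightarrow> ('b set \<Rightarrow> real) \<Rightarrow> bool" where
  "quotient_converges_to J B phi J' B' psi \<longleftrightarrow>
     (\<forall>k\<ge>1. (\<lambda>n. hausdorff_k k (Q k (J n) (B n) (phi n)) (Q k J' B' psi)) \<longlonglongrightarrow> 0)"

definition cantor_set :: "real set" where
  "cantor_set = range (\<lambda>b::nat \<Rightarrow> bool. \<Sum>i. (if b i then 2 else 0) / 3 ^ Suc i)"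

definition cantor_borel :: "real set set" where
  "cantor_borel = sets (restrict_space borel cantor_set)"

end

theory Submission
  imports Defs
begin

text \<open>Quotient convergence for k = 1 says that the totals \<open>\<phi>\<^sub>n(J\<^sub>n)\<close> form a Cauchy
  sequence, so the \<open>\<phi>\<^sub>n\<close> are uniformly bounded. Enumerate the countably many targets
  \<open>(k, w)\<close> with \<open>w\<close> a rational point of \<open>\<real>\<^bsup>2\<^sup>k\<^esup>\<close>. For every \<open>m\<close> and every target choose a
  \<open>k\<close>-partition of \<open>J\<^sub>m\<close> whose quotient approximates \<open>w\<close> within \<open>1/(m+1)\<close> of the best
  approximation by \<open>Q\<^sub>k(\<phi>\<^sub>m)\<close>, and code each point of \<open>J\<^sub>m\<close> by the list of its classes
  for the first \<open>m\<close> targets. Pushing \<open>\<phi>\<^sub>m\<close> forward along the code gives uniformly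
  bounded increasing submodular setfunctions on all sets of lists; by Tychonoff they have a
  pointwise cluster point \<open>\<psi>\<close>, which is again increasing and submodular. Every quotient of
  \<open>\<psi>\<close> is close to quotients of \<open>\<phi>\<^sub>m\<close> for infinitely many \<open>m\<close>, and for every point \<open>v\<close>
  some quotient of \<open>\<psi>\<close> is nearly as close to \<open>v\<close> as \<open>Q\<^sub>k(\<phi>\<^sub>m)\<close> is; with the Cauchy
  property this gives \<open>Q\<^sub>k(\<phi>\<^sub>n) \<rightarrow> Q\<^sub>k(\<psi>)\<close> in Hausdorff distance. Finally the countable set
  of lists embeds into the Cantor set as a Borel set, and transporting \<open>\<psi>\<close> along the
  embedding does not change its quotients.\<close>

section \<open>Hausdorff distance of quotient sets\<close>

lemma dist_k_ge: "A \<subseteq> {..<k} \<Longrightarrow> \<bar>f A - g A\<bar> \<le> dist_k k f g"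
  unfolding dist_k_def by (intro Max_ge) auto

lemma dist_k_le: "(\<And>A. A \<subseteq> {..<k} \<Longrightarrow> \<bar>f A - g A\<bar> \<le> c) \<Longrightarrow> dist_k k f g \<le> c"
  unfolding dist_k_def by (subst Max_le_iff) auto

lemma dist_k_less: "(\<And>A. A \<subseteq> {..<k} \<Longrightarrow> \<bar>f A - g A\<bar> < c) \<Longrightarrow> dist_k k f g < c"
  unfolding dist_k_def by (subst Max_less_iff) auto

lemma dist_k_nonneg: "0 \<le> dist_k k f g"
  using dist_k_ge[of "{}" k f g] by simp

lemma dist_k_commute: "dist_k k f g = dist_k k g f"
  unfolding dist_k_def by (simp add: abs_minus_commute)

lemma dist_k_triangle: "dist_k k f h \<le> dist_k k f g + dist_k k g h"
proof (rule dist_k_le)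
  fix A assume "A \<subseteq> {..<k}"
  then have "\<bar>f A - g A\<bar> \<le> dist_k k f g" "\<bar>g A - h A\<bar> \<le> dist_k k g h"
    by (auto intro: dist_k_ge)
  then show "\<bar>f A - h A\<bar> \<le> dist_k k f g + dist_k k g h" by linarith
qed

definition uniformly_bounded :: "(nat set \<Rightarrow> real) set \<Rightarrow> bool" where
  "uniformly_bounded S \<longleftrightarrow> (\<exists>c. \<forall>f\<in>S. \<forall>A. \<bar>f A\<bar> \<le> c)"

definition hausdorff_excess :: "nat \<Rightarrow> (nat set \<Rightarrow> real) set \<Rightarrow> (nat set \<Rightarrow> real) set \<Rightarrow> real" where
  "hausdorff_excess k S T = (SUP f\<in>S. INF g\<in>T. dist_k k f g)"

lemma hausdorff_k_eq_max_excess: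
  "hausdorff_k k S T = max (hausdorff_excess k S T) (hausdorff_excess k T S)"
  unfolding hausdorff_k_def hausdorff_excess_def by (simp add: dist_k_commute)

lemma bdd_below_dist_k: "bdd_below ((\<lambda>g. dist_k k f g) ` T)"
  by (rule bdd_belowI[of _ 0]) (auto simp: dist_k_nonneg)

lemma bdd_above_infdist_k:
  assumes "T \<noteq> {}" "uniformly_bounded S" "uniformly_bounded T"
  shows "bdd_above ((\<lambda>f. INF g\<in>T. dist_k k f g) ` S)"
proof -
  obtain c c' where c: "\<forall>f\<in>S. \<forall>A. \<bar>f A\<bar> \<le> c" and c': "\<forall>g\<in>T. \<forall>A. \<bar>g A\<bar> \<le> c'"
    using assms(2,3) unfolding uniformly_bounded_def by blast
  obtain g0 where g0: "g0 \<in> T" using assms(1) by blast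
  show ?thesis
  proof (rule bdd_aboveI2)
    fix f assume f: "f \<in> S"
    have "(INF g\<in>T. dist_k k f g) \<le> dist_k k f g0"
      using g0 by (intro cINF_lower bdd_below_dist_k)
    also have "\<dots> \<le> c + c'"
    proof (rule dist_k_le)
      fix A
      have "\<bar>f A\<bar> \<le> c" "\<bar>g0 A\<bar> \<le> c'" using c f c' g0 by auto
      then show "\<bar>f A - g0 A\<bar> \<le> c + c'" by linarith
    qed
    finally show "(INF g\<in>T. dist_k k f g) \<le> c + c'" .
  qed
qed

lemma hausdorff_excess_lessD:
  assumes "S \<noteq> {}" "T \<noteq> {}" "uniformly_bounded S" "uniformly_bounded T"
    and "hausdorff_excess k S T < e" "f \<in> S"
  shows "\<exists>g\<in>T. dist_k k f g < e"
proof -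
  have "(INF g\<in>T. dist_k k f g) \<le> hausdorff_excess k S T"
    unfolding hausdorff_excess_def using assms(6) bdd_above_infdist_k[OF assms(2-4)]
    by (rule cSUP_upper)
  then have "(INF g\<in>T. dist_k k f g) < e" using assms(5) by linarith
  then show ?thesis using assms(2) by (simp add: cINF_less_iff bdd_below_dist_k)
qed

lemma hausdorff_excess_le:
  assumes "S \<noteq> {}" "T \<noteq> {}" and "\<And>f. f \<in> S \<Longrightarrow> \<exists>g\<in>T. dist_k k f g < e"
  shows "hausdorff_excess k S T \<le> e"
  unfolding hausdorff_excess_def
proof (rule cSUP_least[OF assms(1)])
  fix f assume "f \<in> S"
  then obtain g where "g \<in> T" "dist_k k f g < e" using assms(3) by blast
  then show "(INF g\<in>T. dist_k k f g) \<le> e"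
    by (meson bdd_below_dist_k cINF_lower less_imp_le order_trans)
qed

lemma hausdorff_excess_nonneg:
  assumes "S \<noteq> {}" "T \<noteq> {}" "uniformly_bounded S" "uniformly_bounded T"
  shows "0 \<le> hausdorff_excess k S T"
proof -
  obtain f where f: "f \<in> S" using assms(1) by blast
  have "0 \<le> (INF g\<in>T. dist_k k f g)"
    using assms(2) dist_k_nonneg by (intro cINF_greatest)
  also have "\<dots> \<le> hausdorff_excess k S T"
    unfolding hausdorff_excess_def using f bdd_above_infdist_k[OF assms(2-4)]
    by (rule cSUP_upper)
  finally show ?thesis .
qed

lemma hausdorff_k_lessD:
  assumes "S \<noteq> {}" "T \<noteq> {}" "uniformly_bounded S" "uniformly_bounded T"
    and "hausdorff_k k S T < e"
  shows "f \<in> S \<Longrightarrow> \<exists>g\<in>T. dist_k k f g < e"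
    and "g \<in> T \<Longrightarrow> \<exists>f\<in>S. dist_k k f g < e"
proof -
  have "hausdorff_excess k S T < e" "hausdorff_excess k T S < e"
    using assms(5) by (auto simp: hausdorff_k_eq_max_excess)
  then show "f \<in> S \<Longrightarrow> \<exists>g\<in>T. dist_k k f g < e" "g \<in> T \<Longrightarrow> \<exists>f\<in>S. dist_k k f g < e"
    using hausdorff_excess_lessD[OF assms(1-4)] hausdorff_excess_lessD[OF assms(2,1,4,3), of k e g]
    by (auto simp: dist_k_commute[of k _ g])
qed

lemma hausdorff_k_le:
  assumes "S \<noteq> {}" "T \<noteq> {}"
    and "\<And>f. f \<in> S \<Longrightarrow> \<exists>g\<in>T. dist_k k f g < e"
    and "\<And>g. g \<in> T \<Longrightarrow> \<exists>f\<in>S. dist_k k f g < e"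
  shows "hausdorff_k k S T \<le> e"
  using assms hausdorff_excess_le[OF assms(1,2)] hausdorff_excess_le[OF assms(2,1)]
  by (simp add: hausdorff_k_eq_max_excess dist_k_commute)

lemma hausdorff_k_nonneg:
  "S \<noteq> {} \<Longrightarrow> T \<noteq> {} \<Longrightarrow> uniformly_bounded S \<Longrightarrow> uniformly_bounded T \<Longrightarrow> 0 \<le> hausdorff_k k S T"
  by (simp add: hausdorff_k_eq_max_excess hausdorff_excess_nonneg le_max_iff_disj)

lemma hausdorff_k_singleton [simp]: "hausdorff_k k {f} {g} = dist_k k f g"
  by (simp add: hausdorff_k_def dist_k_commute)

lemma hausdorff_k_tendsto_0I:
  assumes ne: "\<And>n. S n \<noteq> {}" "T \<noteq> {}"
    and bnd: "\<And>n. uniformly_bounded (S n)" "uniformly_bounded T"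
    and Cauchy: "\<And>e. 0 < e \<Longrightarrow> \<exists>N. \<forall>m\<ge>N. \<forall>n\<ge>N. hausdorff_k k (S m) (S n) < e"
    and cluster: "\<And>g d M. g \<in> T \<Longrightarrow> 0 < d \<Longrightarrow> \<exists>m\<ge>M. \<exists>q\<in>S m. dist_k k q g < d"
    and near_best: "\<And>v e M. 0 < e \<Longrightarrow> \<exists>g\<in>T. \<exists>m\<ge>M. \<forall>q\<in>S m. dist_k k g v < dist_k k q v + e"
  shows "(\<lambda>n. hausdorff_k k (S n) T) \<longlonglongrightarrow> 0"
proof (rule LIMSEQ_I)
  fix r :: real assume "0 < r"
  define e where "e = r / 3"
  have "0 < e" using \<open>0 < r\<close> by (simp add: e_def)
  then obtain N where N: "\<And>m n. m \<ge> N \<Longrightarrow> n \<ge> N \<Longrightarrow> hausdorff_k k (S m) (S n) < e"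
    using Cauchy by blast
  have bound: "hausdorff_k k (S n) T \<le> 2 * e" if "n \<ge> N" for n
  proof (rule hausdorff_k_le[OF ne(1) ne(2)])
    fix f assume f: "f \<in> S n"
    obtain g m where g: "g \<in> T" "m \<ge> N" and best: "\<forall>q\<in>S m. dist_k k g f < dist_k k q f + e"
      using near_best[OF \<open>0 < e\<close>] by blast
    obtain q where "q \<in> S m" "dist_k k f q < e"
      using hausdorff_k_lessD(1)[OF ne(1) ne(1) bnd(1) bnd(1) N[OF \<open>n \<ge> N\<close> \<open>m \<ge> N\<close>] f] by blast
    with best have "dist_k k f g < 2 * e" by (fastforce simp: dist_k_commute)
    with g show "\<exists>g\<in>T. dist_k k f g < 2 * e" by blast
  next
    fix g assume "g \<in> T"
    then obtain m q where "m \<ge> N" "q \<in> S m" and qg: "dist_k k q g < e"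
      using cluster \<open>0 < e\<close> by blast
    then obtain f where f: "f \<in> S n" "dist_k k q f < e"
      using hausdorff_k_lessD(1)[OF ne(1) ne(1) bnd(1) bnd(1) N[OF \<open>m \<ge> N\<close> \<open>n \<ge> N\<close>]] by blast
    have "dist_k k f g \<le> dist_k k f q + dist_k k q g" by (rule dist_k_triangle)
    with f qg have "dist_k k f g < 2 * e" by (simp add: dist_k_commute)
    with f show "\<exists>f\<in>S n. dist_k k f g < 2 * e" by blast
  qed
  have "norm (hausdorff_k k (S n) T - 0) < r" if "n \<ge> N" for n
  proof -
    have "0 \<le> hausdorff_k k (S n) T" using ne bnd by (rule hausdorff_k_nonneg)
    then show ?thesis using bound[OF that] \<open>0 < r\<close> unfolding e_def by simp
  qed
  then show "\<exists>N. \<forall>n\<ge>N. norm (hausdorff_k k (S n) T - 0) < r" by blast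
qed

section \<open>Quotients and pushforwards\<close>

lemma increasing_sf_bounds:
  assumes "setfunction J B phi" "increasing_sf B phi" "X \<in> B"
  shows "0 \<le> phi X" "phi X \<le> phi J"
proof -
  interpret algebra J B using assms(1) unfolding setfunction_def by blast
  show "0 \<le> phi X" "phi X \<le> phi J"
    using assms sets_into_space[OF assms(3)] unfolding setfunction_def increasing_sf_def by force+
qed

lemma algebra_vimage_finite_range:
  assumes "algebra J B" "finite R" "F \<in> J \<rightarrow> R" "\<And>c. c \<in> R \<Longrightarrow> {x\<in>J. F x = c} \<in> B"
  shows "{x\<in>J. F x \<in> A} \<in> B"
proof -
  interpret algebra J B by fact
  have "{x\<in>J. F x \<in> A} = {x\<in>J. \<exists>c\<in>A \<inter> R. F x = c}"
    using assms(3) by auto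
  also have "\<dots> \<in> B"
    using assms(2,4) by (intro sets_Collect_finite_Ex) auto
  finally show ?thesis .
qed

lemma partition_vimage_in_algebra:
  fixes k :: nat
  assumes "algebra J B" "F \<in> J \<rightarrow> {..<k}" "\<forall>i<k. {x\<in>J. F x = i} \<in> B"
  shows "{x\<in>J. F x \<in> A} \<in> B"
  using assms by (intro algebra_vimage_finite_range[of _ _ "{..<k}"]) auto

lemma Q_nonempty:
  assumes "algebra J B" "1 \<le> k"
  shows "Q k J B phi \<noteq> {}"
proof -
  interpret algebra J B by fact
  have "{x\<in>J. (0::nat) = i} \<in> B" for i by (cases "i = 0") auto
  then have "quotient_sf k J phi (\<lambda>_. 0) \<in> Q k J B phi"
    unfolding Q_def using assms(2) by fastforce
  then show ?thesis by blast
qed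

lemma Q_uniformly_bounded:
  assumes "setfunction J B phi" "increasing_sf B phi"
  shows "uniformly_bounded (Q k J B phi)"
  unfolding uniformly_bounded_def
proof (intro exI ballI allI)
  fix q A assume "q \<in> Q k J B phi"
  then obtain F where F: "F \<in> J \<rightarrow> {..<k}" "\<forall>i<k. {x\<in>J. F x = i} \<in> B"
    and q: "q = quotient_sf k J phi F"
    unfolding Q_def by blast
  have alg: "algebra J B" using assms(1) unfolding setfunction_def by blast
  have "{x\<in>J. F x \<in> A} \<in> B" by (rule partition_vimage_in_algebra[OF alg F])
  moreover have "J \<in> B" using alg by (rule algebra.top)
  ultimately show "\<bar>q A\<bar> \<le> phi J"
    using increasing_sf_bounds[OF assms] unfolding q quotient_sf_def by auto
qed

lemma quotient_sf_cong:
  assumes "\<And>x. x \<in> J \<Longrightarrow> F x = F' x"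
  shows "quotient_sf k J phi F = quotient_sf k J phi F'"
proof -
  have "{x\<in>J. F x \<in> A} = {x\<in>J. F' x \<in> A}" for A using assms by auto
  then show ?thesis unfolding quotient_sf_def by (simp only:)
qed

lemma Q_one:
  assumes "algebra J B"
  shows "Q 1 J B phi = {quotient_sf 1 J phi (\<lambda>_. 0)}"
proof -
  have "quotient_sf 1 J phi F = quotient_sf 1 J phi (\<lambda>_. 0)" if "F \<in> J \<rightarrow> {..<1}" for F
    using funcset_mem[OF that] by (intro quotient_sf_cong) simp
  moreover have "(\<lambda>_. 0) \<in> J \<rightarrow> {..<1::nat}" "\<forall>i<1. {x\<in>J. (0::nat) = i} \<in> B"
    using algebra.top[OF assms] by auto
  ultimately show ?thesis unfolding Q_def by blast
qed

lemma quotient_convergent_Cauchy_total: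
  assumes "\<And>n. algebra (J n) (B n)" "quotient_convergent J B phi"
  shows "Cauchy (\<lambda>n. phi n (J n))"
proof (rule CauchyI)
  fix e :: real assume "0 < e"
  then obtain N where N: "\<And>m n. m \<ge> N \<Longrightarrow> n \<ge> N \<Longrightarrow>
      hausdorff_k 1 (Q 1 (J m) (B m) (phi m)) (Q 1 (J n) (B n) (phi n)) < e"
    using assms(2) unfolding quotient_convergent_def by blast
  have "norm (phi m (J m) - phi n (J n)) < e" if "m \<ge> N" "n \<ge> N" for m n
  proof -
    have "\<bar>quotient_sf 1 (J m) (phi m) (\<lambda>_. 0) {0} - quotient_sf 1 (J n) (phi n) (\<lambda>_. 0) {0}\<bar>
        \<le> dist_k 1 (quotient_sf 1 (J m) (phi m) (\<lambda>_. 0)) (quotient_sf 1 (J n) (phi n) (\<lambda>_. 0))"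
      by (rule dist_k_ge) auto
    also have "\<dots> < e" using N[OF that] unfolding Q_one[OF assms(1)] by simp
    finally show ?thesis by (simp add: quotient_sf_def)
  qed
  then show "\<exists>N. \<forall>m\<ge>N. \<forall>n\<ge>N. norm (phi m (J m) - phi n (J n)) < e" by blast
qed

definition pushforward_sf :: "'a set \<Rightarrow> ('a \<Rightarrow> 'b) \<Rightarrow> ('a set \<Rightarrow> real) \<Rightarrow> 'b set \<Rightarrow> real" where
  "pushforward_sf J h phi Y = phi {x\<in>J. h x \<in> Y}"

lemma pushforward_sf_empty [simp]: "pushforward_sf J h phi {} = phi {}"
  by (simp add: pushforward_sf_def)

lemma increasing_sf_pushforward:
  assumes "increasing_sf B phi" "\<And>Y. {x\<in>J. h x \<in> Y} \<in> B"
  shows "increasing_sf C (pushforward_sf J h phi)"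
  unfolding increasing_sf_def pushforward_sf_def
proof (intro ballI impI)
  fix X Y :: "'b set" assume "X \<subseteq> Y"
  then have "{x\<in>J. h x \<in> X} \<subseteq> {x\<in>J. h x \<in> Y}" by auto
  then show "phi {x\<in>J. h x \<in> X} \<le> phi {x\<in>J. h x \<in> Y}"
    using assms unfolding increasing_sf_def by blast
qed

lemma submodular_sf_pushforward:
  assumes "submodular_sf B phi" "\<And>Y. {x\<in>J. h x \<in> Y} \<in> B"
  shows "submodular_sf C (pushforward_sf J h phi)"
  unfolding submodular_sf_def pushforward_sf_def
proof (intro ballI)
  fix X Y :: "'b set"
  have "{x\<in>J. h x \<in> X \<inter> Y} = {x\<in>J. h x \<in> X} \<inter> {x\<in>J. h x \<in> Y}"
    "{x\<in>J. h x \<in> X \<union> Y} = {x\<in>J. h x \<in> X} \<union> {x\<in>J. h x \<in> Y}" by auto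
  then show "phi {x\<in>J. h x \<in> X \<inter> Y} + phi {x\<in>J. h x \<in> X \<union> Y} \<le> phi {x\<in>J. h x \<in> X} + phi {x\<in>J. h x \<in> Y}"
    using assms unfolding submodular_sf_def by simp
qed

lemma quotient_sf_pushforward:
  assumes "h \<in> J \<rightarrow> J'"
  shows "quotient_sf k J' (pushforward_sf J h phi) G = quotient_sf k J phi (G \<circ> h)"
proof -
  have "{x\<in>J. h x \<in> {y\<in>J'. G y \<in> A}} = {x\<in>J. (G \<circ> h) x \<in> A}" for A
    using assms by auto
  then show ?thesis unfolding quotient_sf_def pushforward_sf_def by auto
qed

lemma quotient_sf_comp_in_Q:
  assumes "\<And>Y. {x\<in>J. h x \<in> Y} \<in> B" "G \<in> UNIV \<rightarrow> {..<k}"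
  shows "quotient_sf k J phi (G \<circ> h) \<in> Q k J B phi"
proof -
  have "{x\<in>J. (G \<circ> h) x = i} \<in> B" for i using assms(1)[of "G -` {i}"] by simp
  then show ?thesis using assms(2) unfolding Q_def by fastforce
qed

lemma Q_pushforward_embedding:
  assumes "algebra J B" "inj e" "range e \<subseteq> J" "\<And>S. e ` S \<in> B"
  shows "Q k J B (pushforward_sf UNIV e ps) = Q k UNIV UNIV ps"
proof (intro equalityI subsetI)
  fix q assume "q \<in> Q k J B (pushforward_sf UNIV e ps)"
  then obtain F where F: "F \<in> J \<rightarrow> {..<k}" and q: "q = quotient_sf k J (pushforward_sf UNIV e ps) F"
    unfolding Q_def by blast
  have "e \<in> UNIV \<rightarrow> J" using assms(3) by auto
  then have "q = quotient_sf k UNIV ps (F \<circ> e)" unfolding q by (rule quotient_sf_pushforward)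
  moreover have "F \<circ> e \<in> UNIV \<rightarrow> {..<k}" using F assms(3) by fastforce
  ultimately show "q \<in> Q k UNIV UNIV ps" unfolding Q_def by blast
next
  interpret algebra J B by fact
  fix q assume "q \<in> Q k UNIV UNIV ps"
  then obtain G where G: "G \<in> UNIV \<rightarrow> {..<k}" and q: "q = quotient_sf k UNIV ps G"
    unfolding Q_def by blast
  define F where "F x = (if x \<in> range e then G (inv e x) else 0)" for x
  have Fe: "F (e c) = G c" for c using assms(2) by (simp add: F_def)
  have F_out: "x \<notin> range e \<Longrightarrow> F x = 0" for x by (simp add: F_def)
  have "e \<in> UNIV \<rightarrow> J" using assms(3) by auto
  from quotient_sf_pushforward[OF this]
  have "q = quotient_sf k J (pushforward_sf UNIV e ps) F"
    unfolding q by (simp add: comp_def Fe)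
  moreover have "F \<in> J \<rightarrow> {..<k}"
  proof -
    have "G c < k" for c using G by auto
    moreover from this have "0 < k" by (metis gr_zeroI less_zeroE)
    ultimately show ?thesis by (auto simp: F_def)
  qed
  moreover have "{x\<in>J. F x = i} \<in> B" for i
  proof -
    have "{x\<in>J. F x = i} = e ` (G -` {i}) \<union> (if i = 0 then J - range e else {})"
    proof (intro set_eqI iffI)
      fix x assume "x \<in> {x\<in>J. F x = i}"
      then show "x \<in> e ` (G -` {i}) \<union> (if i = 0 then J - range e else {})"
        by (cases "x \<in> range e") (auto simp: Fe F_out)
    next
      fix x assume "x \<in> e ` (G -` {i}) \<union> (if i = 0 then J - range e else {})"
      then show "x \<in> {x\<in>J. F x = i}"
        using assms(3) by (auto simp: Fe F_out split: if_splits)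
    qed
    then show ?thesis using assms(4)[of UNIV] assms(4)[of "G -` {i}"] by auto
  qed
  ultimately show "q \<in> Q k J B (pushforward_sf UNIV e ps)" unfolding Q_def by blast
qed

section \<open>Pointwise cluster points\<close>

lemma pointwise_cluster_filter:
  fixes s :: "nat \<Rightarrow> 'b \<Rightarrow> 'c::heine_borel"
  assumes "\<And>Y. bounded (range (\<lambda>m. s m Y))"
  obtains U x where "U \<noteq> bot" "\<And>Y. ((\<lambda>f. f Y) \<longlongrightarrow> x Y) U"
    and "\<And>M. eventually (\<lambda>f. \<exists>m\<ge>M. f = s m) U"
proof -
  define K where "K = PiE UNIV (\<lambda>Y. closure (range (\<lambda>m. s m Y)))"
  have "compactin (product_topology (\<lambda>_. euclidean) UNIV) K"
    unfolding K_def using assms by (subst compactin_PiE) (auto intro: compact_closure[THEN iffD2])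
  then have "compact K" by (simp add: euclidean_product_topology)
  define F where "F = filtermap s sequentially"
  have "F \<noteq> bot" by (simp add: F_def filtermap_bot_iff)
  moreover have "eventually (\<lambda>f. f \<in> K) F"
    unfolding F_def K_def eventually_filtermap
    by (intro always_eventually) (auto intro: closure_subset[THEN subsetD])
  ultimately obtain x where x: "inf (nhds x) F \<noteq> bot"
    using \<open>compact K\<close> unfolding compact_filter by blast
  show thesis
  proof (rule that[OF x])
    fix Y
    have "(\<lambda>f. f Y) \<midarrow>x\<rightarrow> x Y"
      using continuous_on_product_coordinates[of Y] unfolding continuous_on_def by blast
    then have "((\<lambda>f. f Y) \<longlongrightarrow> x Y) (nhds x)"
      by (rule tendsto_at_iff_tendsto_nhds[THEN iffD1])
    then show "((\<lambda>f. f Y) \<longlongrightarrow> x Y) (inf (nhds x) F)"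
      by (rule tendsto_mono[rotated]) simp
  next
    fix M
    have "eventually (\<lambda>f. \<exists>m\<ge>M. f = s m) F"
      unfolding F_def eventually_filtermap eventually_sequentially by blast
    then show "eventually (\<lambda>f. \<exists>m\<ge>M. f = s m) (inf (nhds x) F)"
      by (rule filter_leD[rotated]) simp
  qed
qed

lemma cluster_filter_approx:
  assumes "U \<noteq> bot" "\<And>Y. ((\<lambda>f. f Y) \<longlongrightarrow> x Y) U" "eventually (\<lambda>f. \<exists>m\<ge>M. f = s m) U"
    and "finite S" "0 < d"
  shows "\<exists>m\<ge>M. \<forall>Y\<in>S. dist (s m Y) (x Y) < d"
proof -
  have "eventually (\<lambda>f. \<forall>Y\<in>S. dist (f Y) (x Y) < d) U"
    using assms(2,4,5) by (intro eventually_ball_finite) (auto intro: tendstoD)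
  with assms(3) have "eventually (\<lambda>f. (\<exists>m\<ge>M. f = s m) \<and> (\<forall>Y\<in>S. dist (f Y) (x Y) < d)) U"
    by (rule eventually_conj)
  from eventually_happens'[OF assms(1) this] show ?thesis by blast
qed

lemma increasing_submodular_limit:
  fixes x :: "'b set \<Rightarrow> real"
  assumes "U \<noteq> bot" "\<And>Y. ((\<lambda>f. f Y) \<longlongrightarrow> x Y) U"
    and "eventually (\<lambda>f. f {} = 0 \<and> increasing_sf UNIV f \<and> submodular_sf UNIV f) U"
  shows "x {} = 0" "increasing_sf UNIV x" "submodular_sf UNIV x"
proof -
  have "((\<lambda>f. f {}) \<longlongrightarrow> 0) U"
    using assms(3) by (intro tendsto_eventually) (auto elim: eventually_mono)
  with assms(1,2) show "x {} = 0" by (rule tendsto_unique)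
  show "increasing_sf UNIV x" unfolding increasing_sf_def
  proof (intro ballI impI)
    fix X Y :: "'b set" assume "X \<subseteq> Y"
    with assms(3) have "eventually (\<lambda>f. f X \<le> f Y) U"
      by (auto elim: eventually_mono simp: increasing_sf_def)
    then show "x X \<le> x Y" by (rule tendsto_le[OF assms(1) assms(2) assms(2)])
  qed
  show "submodular_sf UNIV x" unfolding submodular_sf_def
  proof (intro ballI)
    fix X Y :: "'b set"
    from assms(3) have "eventually (\<lambda>f. f (X \<inter> Y) + f (X \<union> Y) \<le> f X + f Y) U"
      by (auto elim: eventually_mono simp: submodular_sf_def)
    then show "x (X \<inter> Y) + x (X \<union> Y) \<le> x X + x Y"
      by (rule tendsto_le[OF assms(1) tendsto_add[OF assms(2) assms(2)] tendsto_add[OF assms(2) assms(2)]])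
  qed
qed

section \<open>Universal codes and the limit on lists\<close>

lemma exists_near_best_partition:
  assumes "algebra J B" "1 \<le> k" "0 < \<delta>"
  obtains F where "F \<in> J \<rightarrow> {..<k}" "\<forall>i<k. {x\<in>J. F x = i} \<in> B"
    and "\<And>q. q \<in> Q k J B phi \<Longrightarrow> dist_k k (quotient_sf k J phi F) v < dist_k k q v + \<delta>"
proof -
  define D where "D = (INF q\<in>Q k J B phi. dist_k k q v)"
  have bdd: "bdd_below ((\<lambda>q. dist_k k q v) ` Q k J B phi)"
    by (rule bdd_belowI[of _ 0]) (auto simp: dist_k_nonneg)
  have "D < D + \<delta>" using assms(3) by simp
  then obtain q0 where "q0 \<in> Q k J B phi" and q0: "dist_k k q0 v < D + \<delta>"
    unfolding D_def using Q_nonempty[OF assms(1,2)] bdd by (subst (asm) cINF_less_iff) auto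
  then obtain F where F: "F \<in> J \<rightarrow> {..<k}" "\<forall>i<k. {x\<in>J. F x = i} \<in> B"
    and "q0 = quotient_sf k J phi F"
    unfolding Q_def by blast
  moreover have "D \<le> dist_k k q v" if "q \<in> Q k J B phi" for q
    unfolding D_def by (rule cINF_lower[OF bdd that])
  ultimately show thesis using q0 by (intro that[OF F]) fastforce
qed

lemma list_code_vimage_in_algebra:
  fixes P :: "nat \<Rightarrow> 'a \<Rightarrow> nat"
  assumes alg: "algebra J B" and P: "\<And>t. t < m \<Longrightarrow> P t \<in> J \<rightarrow> {..<K t}"
    and fibres: "\<And>t. t < m \<Longrightarrow> \<forall>i<K t. {x\<in>J. P t x = i} \<in> B"
  shows "{x\<in>J. map (\<lambda>t. P t x) [0..<m] \<in> Y} \<in> B"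
proof (rule algebra_vimage_finite_range[OF alg])
  define R where "R = {c. set c \<subseteq> (\<Union>t<m. {..<K t}) \<and> length c = m}"
  show "finite R" unfolding R_def by (intro finite_lists_length_eq) auto
  show "(\<lambda>x. map (\<lambda>t. P t x) [0..<m]) \<in> J \<rightarrow> R"
    using P unfolding R_def by fastforce
  fix c assume "c \<in> R"
  then have "{x\<in>J. map (\<lambda>t. P t x) [0..<m] = c} = {x\<in>J. \<forall>t\<in>{..<m}. P t x \<in> {c ! t}}"
    unfolding R_def by (auto simp: list_eq_iff_nth_eq)
  also have "\<dots> \<in> B"
    using alg P fibres by (intro algebra.sets_Collect_finite_All[OF alg] partition_vimage_in_algebra) auto
  finally show "{x\<in>J. map (\<lambda>t. P t x) [0..<m] = c} \<in> B" .
qed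

lemma exists_near_best_partition_family:
  fixes k :: "nat \<Rightarrow> nat" and v :: "nat \<Rightarrow> nat set \<Rightarrow> real"
  assumes alg: "\<And>m. algebra (J m) (B m)" and k: "\<And>t. 1 \<le> k t"
  obtains P where "\<And>m t. P m t \<in> J m \<rightarrow> {..<k t}" "\<And>m t. \<forall>i<k t. {x\<in>J m. P m t x = i} \<in> B m"
    and "\<And>m t q. q \<in> Q (k t) (J m) (B m) (phi m) \<Longrightarrow>
      dist_k (k t) (quotient_sf (k t) (J m) (phi m) (P m t)) (v t) < dist_k (k t) q (v t) + 1 / Suc m"
proof -
  define near_best where "near_best m t F \<longleftrightarrow>
      F \<in> J m \<rightarrow> {..<k t} \<and> (\<forall>i<k t. {x\<in>J m. F x = i} \<in> B m) \<and>
      (\<forall>q\<in>Q (k t) (J m) (B m) (phi m).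
         dist_k (k t) (quotient_sf (k t) (J m) (phi m) F) (v t) < dist_k (k t) q (v t) + 1 / Suc m)"
    for m t F
  have "\<exists>F. near_best m t F" for m t
  proof -
    have "0 < 1 / real (Suc m)" by simp
    then show ?thesis unfolding near_best_def
      by (rule exists_near_best_partition[OF alg[of m] k[of t], where phi = "phi m" and v = "v t"]) blast
  qed
  then obtain P where "\<And>m t. near_best m t (P m t)" by metis
  then show thesis unfolding near_best_def by (intro that) blast+
qed

lemma dist_k_less_shift:
  assumes "dist_k k f w < dist_k k q w + \<delta>"
  shows "dist_k k f v < dist_k k q v + \<delta> + 2 * dist_k k v w"
proof -
  have "dist_k k f v \<le> dist_k k f w + dist_k k w v" by (rule dist_k_triangle)
  moreover have "dist_k k q w \<le> dist_k k q v + dist_k k v w" by (rule dist_k_triangle)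
  ultimately show ?thesis using assms by (simp add: dist_k_commute[of k w v])
qed

lemma exists_dense_target_enumeration:
  obtains target :: "nat \<Rightarrow> nat \<times> (nat set \<Rightarrow> real)"
  where "\<And>t. 1 \<le> fst (target t)"
    and "\<And>k v e. 1 \<le> k \<Longrightarrow> 0 < e \<Longrightarrow> \<exists>t. fst (target t) = k \<and> dist_k k v (snd (target t)) < e"
proof -
  define targets :: "(nat \<times> (nat set \<Rightarrow> real)) set" where "targets = (SIGMA k:{1..}. Pow {..<k} \<rightarrow>\<^sub>E \<rat>)"
  have "countable targets" unfolding targets_def by (intro countable_SIGMA countable_PiE) (auto simp: countable_rat)
  have "(1, \<lambda>A\<in>Pow {..<1}. 0) \<in> targets" unfolding targets_def by auto
  then have target_in: "from_nat_into targets t \<in> targets" for t by (auto intro: from_nat_into)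
  show thesis
  proof (rule that)
    show "1 \<le> fst (from_nat_into targets t)" for t using target_in[of t] by (auto simp: targets_def)
  next
    fix k :: nat and v :: "nat set \<Rightarrow> real" and e :: real assume "1 \<le> k" "0 < e"
    then have "\<forall>A. \<exists>r\<in>\<rat>. v A < r \<and> r < v A + e" by (auto intro: Rats_dense_in_real)
    then obtain r where r: "\<And>A. r A \<in> \<rat>" "\<And>A. v A < r A" "\<And>A. r A < v A + e"
      by metis
    define w where "w = restrict r (Pow {..<k})"
    have "(k, w) \<in> targets" using r(1) \<open>1 \<le> k\<close> by (auto simp: targets_def w_def)
    then obtain t where t: "from_nat_into targets t = (k, w)"
      using from_nat_into_surj[OF \<open>countable targets\<close>] by blast
    have "dist_k k v w < e"
    proof (rule dist_k_less)
      fix A :: "nat set" assume "A \<subseteq> {..<k}"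
      then show "\<bar>v A - w A\<bar> < e" using r(2,3)[of A] by (simp add: w_def)
    qed
    with t show "\<exists>t. fst (from_nat_into targets t) = k \<and> dist_k k v (snd (from_nat_into targets t)) < e"
      by (intro exI[of _ t]) simp
  qed
qed

lemma exists_universal_code:
  fixes J :: "nat \<Rightarrow> 'a set" and B :: "nat \<Rightarrow> 'a set set" and phi :: "nat \<Rightarrow> 'a set \<Rightarrow> real"
  assumes alg: "\<And>m. algebra (J m) (B m)"
  obtains h :: "nat \<Rightarrow> 'a \<Rightarrow> nat list"
  where "\<And>m Y. {x\<in>J m. h m x \<in> Y} \<in> B m"
    and "\<And>k v e. 1 \<le> k \<Longrightarrow> 0 < e \<Longrightarrow> \<exists>G\<in>UNIV \<rightarrow> {..<k}. \<exists>m0. \<forall>m\<ge>m0. \<forall>q\<in>Q k (J m) (B m) (phi m).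
           dist_k k (quotient_sf k (J m) (phi m) (G \<circ> h m)) v < dist_k k q v + e"
proof -
  obtain target :: "nat \<Rightarrow> nat \<times> (nat set \<Rightarrow> real)" where target_pos: "\<And>t. 1 \<le> fst (target t)"
    and dense: "\<And>k v e. 1 \<le> k \<Longrightarrow> 0 < e \<Longrightarrow> \<exists>t. fst (target t) = k \<and> dist_k k v (snd (target t)) < e"
    by (rule exists_dense_target_enumeration) blast
  define k_of where "k_of t = fst (target t)" for t
  define v_of where "v_of t = snd (target t)" for t
  have k_of: "1 \<le> k_of t" for t using target_pos by (simp add: k_of_def)
  obtain P where P: "\<And>m t. P m t \<in> J m \<rightarrow> {..<k_of t}" "\<And>m t. \<forall>i<k_of t. {x\<in>J m. P m t x = i} \<in> B m"
    and P_best: "\<And>m t q. q \<in> Q (k_of t) (J m) (B m) (phi m) \<Longrightarrow>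
      dist_k (k_of t) (quotient_sf (k_of t) (J m) (phi m) (P m t)) (v_of t) < dist_k (k_of t) q (v_of t) + 1 / Suc m"
    using exists_near_best_partition_family[where J = J and B = B and phi = phi and k = k_of and v = v_of,
        OF alg k_of]
    by blast
  \<comment> \<open>At stage m the code of x lists its classes in the near-best partitions for the
    first m targets, so every target is recorded from some stage on.\<close>
  define h where "h m x = map (\<lambda>t. P m t x) [0..<m]" for m x
  show thesis
  proof (rule that)
    show "{x\<in>J m. h m x \<in> Y} \<in> B m" for m Y
      unfolding h_def using alg P by (rule list_code_vimage_in_algebra)
  next
    fix k :: nat and v and e :: real assume "1 \<le> k" "0 < e"
    then obtain t where t: "k_of t = k" and w: "dist_k k v (v_of t) < e / 3"
      using dense[of k "e / 3" v] by (auto simp: k_of_def v_of_def)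
    define G where "G c = (if t < length c \<and> c ! t < k then c ! t else 0)" for c
    obtain m0 where m0: "inverse (real (Suc m0)) < e / 3"
      using reals_Archimedean[of "e / 3"] \<open>0 < e\<close> by auto
    have "dist_k k (quotient_sf k (J m) (phi m) (G \<circ> h m)) v < dist_k k q v + e"
      if m: "max (Suc t) m0 \<le> m" and q: "q \<in> Q k (J m) (B m) (phi m)" for m q
    proof -
      have "P m t x < k" if "x \<in> J m" for x
        using P(1)[of m t] that by (auto simp: t)
      then have "quotient_sf k (J m) (phi m) (G \<circ> h m) = quotient_sf k (J m) (phi m) (P m t)"
        using m by (intro quotient_sf_cong) (simp add: G_def h_def)
      moreover have "1 / real (Suc m) \<le> 1 / real (Suc m0)"
        using m by (intro divide_left_mono) auto
      moreover have "dist_k k (quotient_sf k (J m) (phi m) (P m t)) v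
          < dist_k k q v + 1 / Suc m + 2 * dist_k k v (v_of t)"
        using P_best[of q t m] q by (intro dist_k_less_shift) (simp add: t)
      ultimately show ?thesis using w m0 by (simp add: inverse_eq_divide)
    qed
    moreover have "G \<in> UNIV \<rightarrow> {..<k}" using \<open>1 \<le> k\<close> by (auto simp: G_def)
    ultimately show "\<exists>G\<in>UNIV \<rightarrow> {..<k}. \<exists>m0. \<forall>m\<ge>m0. \<forall>q\<in>Q k (J m) (B m) (phi m).
        dist_k k (quotient_sf k (J m) (phi m) (G \<circ> h m)) v < dist_k k q v + e" by blast
  qed
qed

lemma quotient_converges_to_coded_limit:
  fixes ps :: "'b set \<Rightarrow> real" and h :: "nat \<Rightarrow> 'a \<Rightarrow> 'b"
  assumes sf: "\<And>n. setfunction (J n) (B n) (phi n)" and inc: "\<And>n. increasing_sf (B n) (phi n)"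
    and qc: "quotient_convergent J B phi"
    and ps: "ps {} = 0" "increasing_sf UNIV ps"
    and h_in: "\<And>m Y. {x\<in>J m. h m x \<in> Y} \<in> B m"
    and h_univ: "\<And>k v e. 1 \<le> k \<Longrightarrow> 0 < e \<Longrightarrow> \<exists>G\<in>UNIV \<rightarrow> {..<k}. \<exists>m0. \<forall>m\<ge>m0. \<forall>q\<in>Q k (J m) (B m) (phi m).
           dist_k k (quotient_sf k (J m) (phi m) (G \<circ> h m)) v < dist_k k q v + e"
    and close: "\<And>k G d M. 0 < d \<Longrightarrow>
           \<exists>m\<ge>M. dist_k k (quotient_sf k (J m) (phi m) (G \<circ> h m)) (quotient_sf k UNIV ps G) < d"
  shows "quotient_converges_to J B phi UNIV UNIV ps"
  unfolding quotient_converges_to_def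
proof (intro allI impI)
  fix k :: nat assume "1 \<le> k"
  have alg: "algebra (J n) (B n)" for n using sf by (simp add: setfunction_def)
  have ps_sf: "setfunction UNIV UNIV ps" using ps(1) algebra_Pow[of UNIV] by (simp add: setfunction_def)
  show "(\<lambda>n. hausdorff_k k (Q k (J n) (B n) (phi n)) (Q k UNIV UNIV ps)) \<longlonglongrightarrow> 0"
  proof (rule hausdorff_k_tendsto_0I)
    show "Q k (J n) (B n) (phi n) \<noteq> {}" for n using alg \<open>1 \<le> k\<close> by (rule Q_nonempty)
    show "Q k UNIV UNIV ps \<noteq> {}" using ps_sf \<open>1 \<le> k\<close> by (intro Q_nonempty) (simp add: setfunction_def)
    show "uniformly_bounded (Q k (J n) (B n) (phi n))" for n using sf inc by (rule Q_uniformly_bounded)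
    show "uniformly_bounded (Q k UNIV UNIV ps)" using ps_sf ps(2) by (rule Q_uniformly_bounded)
    show "\<exists>N. \<forall>m\<ge>N. \<forall>n\<ge>N. hausdorff_k k (Q k (J m) (B m) (phi m)) (Q k (J n) (B n) (phi n)) < e"
      if "0 < e" for e using qc \<open>1 \<le> k\<close> that unfolding quotient_convergent_def by blast
  next
    fix g and d :: real and M assume "g \<in> Q k UNIV UNIV ps" "0 < d"
    then obtain G where G: "G \<in> UNIV \<rightarrow> {..<k}" and g: "g = quotient_sf k UNIV ps G"
      unfolding Q_def by blast
    from close[OF \<open>0 < d\<close>] obtain m where "m \<ge> M"
      "dist_k k (quotient_sf k (J m) (phi m) (G \<circ> h m)) g < d" unfolding g by blast
    with quotient_sf_comp_in_Q[OF h_in G] show "\<exists>m\<ge>M. \<exists>q\<in>Q k (J m) (B m) (phi m). dist_k k q g < d" by blast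
  next
    fix v and e :: real and M assume "0 < e"
    then obtain G m0 where G: "G \<in> UNIV \<rightarrow> {..<k}" and m0: "\<forall>m\<ge>m0. \<forall>q\<in>Q k (J m) (B m) (phi m).
        dist_k k (quotient_sf k (J m) (phi m) (G \<circ> h m)) v < dist_k k q v + e / 2"
      using h_univ[OF \<open>1 \<le> k\<close>, of "e / 2" v] by auto
    obtain m where m: "m \<ge> max M m0"
      and close_m: "dist_k k (quotient_sf k (J m) (phi m) (G \<circ> h m)) (quotient_sf k UNIV ps G) < e / 2"
      using close[where k = k and G = G and d = "e / 2" and M = "max M m0"] \<open>0 < e\<close> by auto
    have "dist_k k (quotient_sf k UNIV ps G) v < dist_k k q v + e" if "q \<in> Q k (J m) (B m) (phi m)" for q
    proof -
      have "dist_k k (quotient_sf k UNIV ps G) v \<le> dist_k k (quotient_sf k UNIV ps G)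
          (quotient_sf k (J m) (phi m) (G \<circ> h m)) + dist_k k (quotient_sf k (J m) (phi m) (G \<circ> h m)) v"
        by (rule dist_k_triangle)
      then show ?thesis using m0 m that close_m by (fastforce simp: dist_k_commute)
    qed
    moreover have "quotient_sf k UNIV ps G \<in> Q k UNIV UNIV ps" using G unfolding Q_def by blast
    ultimately show "\<exists>g\<in>Q k UNIV UNIV ps. \<exists>m\<ge>M. \<forall>q\<in>Q k (J m) (B m) (phi m). dist_k k g v < dist_k k q v + e"
      using m by (intro bexI[of _ "quotient_sf k UNIV ps G"] exI[of _ m]) auto
  qed
qed

lemma exists_cluster_limit_of_pushforwards:
  fixes h :: "nat \<Rightarrow> 'a \<Rightarrow> 'b"
  assumes sf: "\<And>n. setfunction (J n) (B n) (phi n)" and inc: "\<And>n. increasing_sf (B n) (phi n)"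
    and sm: "\<And>n. submodular_sf (B n) (phi n)" and bound: "\<And>n. phi n (J n) \<le> M"
    and h_in: "\<And>m Y. {x\<in>J m. h m x \<in> Y} \<in> B m"
  obtains ps :: "'b set \<Rightarrow> real" where "ps {} = 0" "increasing_sf UNIV ps" "submodular_sf UNIV ps"
    and "\<And>k G d M'. 0 < d \<Longrightarrow>
           \<exists>m\<ge>M'. dist_k k (quotient_sf k (J m) (phi m) (G \<circ> h m)) (quotient_sf k UNIV ps G) < d"
proof -
  define s where "s m = pushforward_sf (J m) (h m) (phi m)" for m
  have s_bounded: "bounded (range (\<lambda>m. s m Y))" for Y
  proof -
    have "\<bar>s m Y\<bar> \<le> M" for m
      using increasing_sf_bounds[OF sf[of m] inc[of m] h_in[of m Y]] bound[of m]
      unfolding s_def pushforward_sf_def by simp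
    then show ?thesis unfolding bounded_real by blast
  qed
  obtain U ps where U: "U \<noteq> bot" "\<And>Y. ((\<lambda>f. f Y) \<longlongrightarrow> ps Y) U"
    and tails: "\<And>M. eventually (\<lambda>f. \<exists>m\<ge>M. f = s m) U"
  proof (rule pointwise_cluster_filter[of s, OF s_bounded])
    fix U and x :: "'b set \<Rightarrow> real"
    assume "U \<noteq> bot" "\<And>Y. ((\<lambda>f. f Y) \<longlongrightarrow> x Y) U" "\<And>M. eventually (\<lambda>f. \<exists>m\<ge>M. f = s m) U"
    then show thesis by (rule that)
  qed
  have "s m {} = 0 \<and> increasing_sf UNIV (s m) \<and> submodular_sf UNIV (s m)" for m
    using sf[of m] unfolding s_def setfunction_def
    by (intro conjI increasing_sf_pushforward[OF inc h_in] submodular_sf_pushforward[OF sm h_in]) simp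
  then have "eventually (\<lambda>f. f {} = 0 \<and> increasing_sf UNIV f \<and> submodular_sf UNIV f) U"
    using tails[of 0] by (auto elim: eventually_mono)
  note ps = increasing_submodular_limit[OF U this]
  have "\<exists>m\<ge>M'. dist_k k (quotient_sf k (J m) (phi m) (G \<circ> h m)) (quotient_sf k UNIV ps G) < d"
    if "0 < d" for k G d M'
  proof -
    have "finite ((\<lambda>A. {c. G c \<in> A}) ` Pow {..<k})" by simp
    then obtain m where "m \<ge> M'" and m: "\<forall>Y\<in>(\<lambda>A. {c. G c \<in> A}) ` Pow {..<k}. dist (s m Y) (ps Y) < d"
      using cluster_filter_approx[OF U tails[of M'] _ \<open>0 < d\<close>] by blast
    have "quotient_sf k (J m) (phi m) (G \<circ> h m) = quotient_sf k UNIV (s m) G"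
      unfolding s_def by (simp add: quotient_sf_pushforward)
    moreover have "dist_k k (quotient_sf k UNIV (s m) G) (quotient_sf k UNIV ps G) < d"
      using m by (intro dist_k_less) (auto simp: quotient_sf_def dist_real_def)
    ultimately show ?thesis using \<open>m \<ge> M'\<close> by auto
  qed
  with ps show thesis by (rule that)
qed

lemma quotient_convergent_has_list_limit:
  fixes J :: "nat \<Rightarrow> 'a set" and B :: "nat \<Rightarrow> 'a set set" and phi :: "nat \<Rightarrow> 'a set \<Rightarrow> real"
  assumes sf: "\<And>n. setfunction (J n) (B n) (phi n)" and inc: "\<And>n. increasing_sf (B n) (phi n)"
    and sm: "\<And>n. submodular_sf (B n) (phi n)" and qc: "quotient_convergent J B phi"
  obtains ps :: "nat list set \<Rightarrow> real"
  where "ps {} = 0" "increasing_sf UNIV ps" "submodular_sf UNIV ps"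
    and "quotient_converges_to J B phi UNIV UNIV ps"
proof -
  have alg: "algebra (J n) (B n)" for n using sf by (simp add: setfunction_def)
  have "Bseq (\<lambda>n. phi n (J n))" by (rule Cauchy_Bseq[OF quotient_convergent_Cauchy_total[OF alg qc]])
  then obtain M where M: "\<And>n. phi n (J n) \<le> M" unfolding Bseq_def by (auto dest: abs_le_D1)
  obtain h :: "nat \<Rightarrow> 'a \<Rightarrow> nat list" where h_in: "\<And>m Y. {x\<in>J m. h m x \<in> Y} \<in> B m"
    and h_univ: "\<And>k v e. 1 \<le> k \<Longrightarrow> 0 < e \<Longrightarrow> \<exists>G\<in>UNIV \<rightarrow> {..<k}. \<exists>m0. \<forall>m\<ge>m0. \<forall>q\<in>Q k (J m) (B m) (phi m).
           dist_k k (quotient_sf k (J m) (phi m) (G \<circ> h m)) v < dist_k k q v + e"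
    using exists_universal_code[where J = J and B = B and phi = phi, OF alg] by blast
  obtain ps :: "nat list set \<Rightarrow> real" where ps: "ps {} = 0" "increasing_sf UNIV ps" "submodular_sf UNIV ps"
    and close: "\<And>k G d M'. 0 < d \<Longrightarrow>
           \<exists>m\<ge>M'. dist_k k (quotient_sf k (J m) (phi m) (G \<circ> h m)) (quotient_sf k UNIV ps G) < d"
    using exists_cluster_limit_of_pushforwards[where h = h, OF sf inc sm M h_in] by blast
  show thesis
    using ps quotient_converges_to_coded_limit[OF sf inc qc ps(1,2) h_in h_univ close] by (rule that)
qed

section \<open>Embedding lists into the Cantor set\<close>

definition cantor_point :: "nat \<Rightarrow> real" where
  "cantor_point n = 2 / 3 ^ Suc n"

lemma cantor_point_in_cantor_set: "cantor_point n \<in> cantor_set"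
proof -
  have "(\<lambda>i. (if i = n then 2 else 0) / 3 ^ Suc i :: real) = (\<lambda>i. if i = n then 2 / 3 ^ Suc i else 0)"
    by auto
  moreover have "(\<lambda>i. if i = n then 2 / 3 ^ Suc i else 0 :: real) sums cantor_point n"
    unfolding cantor_point_def by (rule sums_single)
  ultimately show ?thesis
    unfolding cantor_set_def by (intro range_eqI[of _ _ "\<lambda>i. i = n"]) (simp add: sums_iff)
qed

lemma inj_cantor_point: "inj cantor_point"
  by (rule injI) (simp add: cantor_point_def)

lemma algebra_cantor_borel: "algebra cantor_set cantor_borel"
  unfolding cantor_borel_def
  using sets.sigma_algebra_axioms[of "restrict_space borel cantor_set"]
  by (simp add: space_restrict_space sigma_algebra.axioms(1))

lemma countable_in_cantor_borel:
  assumes "countable X" "X \<subseteq> cantor_set"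
  shows "X \<in> cantor_borel"
proof -
  have "X \<in> sets borel" by (intro sets.countable[OF _ assms(1)]) (auto intro: borel_closed)
  then show ?thesis
    using assms(2) unfolding cantor_borel_def sets_restrict_space by (auto intro!: image_eqI[of _ _ X])
qed

theorem theorem3p1:
  fixes J :: "nat \<Rightarrow> 'a set" and B :: "nat \<Rightarrow> 'a set set" and phi :: "nat \<Rightarrow> 'a set \<Rightarrow> real"
  assumes "\<And>n. setfunction (J n) (B n) (phi n)"
    and "\<And>n. increasing_sf (B n) (phi n)"
    and "\<And>n. submodular_sf (B n) (phi n)"
    and "quotient_convergent J B phi"
  shows "\<exists>psi :: real set \<Rightarrow> real.
           setfunction cantor_set cantor_borel psi \<and>
           increasing_sf cantor_borel psi \<and> submodular_sf cantor_borel psi \<and>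
           quotient_converges_to J B phi cantor_set cantor_borel psi"
proof -
  obtain ps :: "nat list set \<Rightarrow> real" where ps: "ps {} = 0" "increasing_sf UNIV ps" "submodular_sf UNIV ps"
    and conv: "quotient_converges_to J B phi UNIV UNIV ps"
    using quotient_convergent_has_list_limit[OF assms] by blast
  define e :: "nat list \<Rightarrow> real" where "e = cantor_point \<circ> to_nat"
  have e_in: "range e \<subseteq> cantor_set" by (auto simp: e_def cantor_point_in_cantor_set)
  have "inj e" unfolding e_def by (intro inj_compose inj_cantor_point inj_to_nat)
  moreover have "e ` S \<in> cantor_borel" for S using e_in by (intro countable_in_cantor_borel) auto
  ultimately have "Q k cantor_set cantor_borel (pushforward_sf UNIV e ps) = Q k UNIV UNIV ps" for k
    using algebra_cantor_borel e_in by (intro Q_pushforward_embedding)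
  moreover have "increasing_sf cantor_borel (pushforward_sf UNIV e ps)"
    using ps(2) by (rule increasing_sf_pushforward) simp
  moreover have "submodular_sf cantor_borel (pushforward_sf UNIV e ps)"
    using ps(3) by (rule submodular_sf_pushforward) simp
  ultimately show ?thesis using conv ps(1) algebra_cantor_borel
    by (intro exI[of _ "pushforward_sf UNIV e ps"]) (simp add: setfunction_def quotient_converges_to_def)
qed

end
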